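(* Let $k\ge 1$ and $m\ge 0$ be integers. Let $K$ be the set of all odd integers in the closed interval $[1,6k-1]$, and let $$T=\bigcup_{j=0}^{m}5^jK,\qquad\text{where } cU=\{cu:\ u\in U\}.$$ Then $|T|=3k(m+1)-m\lfloor(3k+2)/5\rfloor$. *)

theory Defs
  imports Complex_Main
begin

end

theory Submission
  imports Defs
begin

text \<open>Let \<open>T\<^sub>n\<close> be the union of the sets \<open>5\<^sup>j K\<close> for \<open>j \<le> n\<close>. Then \<open>T\<^sub>n\<^sub>+\<^sub>1 = K \<union> 5 T\<^sub>n\<close>, and since
  \<open>K\<close> is closed under division by 5, the overlap \<open>K \<inter> 5 T\<^sub>n\<close> is always \<open>K \<inter> 5 K\<close>, i.e. the
  multiples of 5 in \<open>K\<close>; there are \<open>\<lfloor>(3k+2)/5\<rfloor>\<close> of them. Each step thus adds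
  \<open>|K| - |K \<inter> 5K| = 3k - \<lfloor>(3k+2)/5\<rfloor>\<close> new elements.\<close>

lemma odd_interval_eq_image:
  fixes N :: int
  shows "{x. odd x \<and> 1 \<le> x \<and> x \<le> N} = (\<lambda>i. 2 * i + 1) ` {0..<(N + 1) div 2}"
proof (intro set_eqI iffI)
  fix x assume x: "x \<in> {x. odd x \<and> 1 \<le> x \<and> x \<le> N}"
  then obtain i where "x = 2 * i + 1" by (metis mem_Collect_eq oddE)
  with x show "x \<in> (\<lambda>i. 2 * i + 1) ` {0..<(N + 1) div 2}"
    by (intro image_eqI[of _ _ i]) auto
qed auto

lemma card_odd_interval:
  fixes N :: int
  shows "card {x. odd x \<and> 1 \<le> x \<and> x \<le> N} = nat ((N + 1) div 2)"
proof -
  have "inj_on (\<lambda>i::int. 2 * i + 1) {0..<(N + 1) div 2}" by (auto simp: inj_on_def)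
  then show ?thesis by (simp add: odd_interval_eq_image card_image)
qed

definition scaled_union :: "'a::monoid_mult \<Rightarrow> 'a set \<Rightarrow> nat \<Rightarrow> 'a set" where
  "scaled_union c K n = (\<Union>j\<in>{0..n}. (\<lambda>u. c ^ j * u) ` K)"

lemma scaled_union_0 [simp]: "scaled_union c K 0 = K"
  by (simp add: scaled_union_def)

lemma scaled_union_Suc:
  "scaled_union c K (Suc n) = K \<union> (\<lambda>u. c * u) ` scaled_union c K n"
proof -
  have "{0..Suc n} = insert 0 (Suc ` {0..n})" by (auto simp: image_iff)
  then have "scaled_union c K (Suc n) = K \<union> (\<Union>j\<in>{0..n}. (\<lambda>u. c ^ Suc j * u) ` K)"
    by (simp add: scaled_union_def del: image_Suc_atLeastAtMost)
  then show ?thesis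
    by (simp add: scaled_union_def image_UN image_image mult.assoc)
qed

lemma finite_scaled_union: "finite K \<Longrightarrow> finite (scaled_union c K n)"
  by (simp add: scaled_union_def)

lemma subset_scaled_union: "K \<subseteq> scaled_union c K n"
  by (auto simp: scaled_union_def intro!: bexI[of _ 0])

lemma scaled_union_Int_scaled:
  assumes "\<And>y. c * y \<in> K \<Longrightarrow> y \<in> K"
  shows "K \<inter> (\<lambda>u. c * u) ` scaled_union c K n = K \<inter> (\<lambda>u. c * u) ` K"
  using assms subset_scaled_union[of K c n] by blast

lemma card_scaled_union:
  fixes c :: "'a::idom"
  assumes "finite K" and "c \<noteq> 0" and closed: "\<And>y. c * y \<in> K \<Longrightarrow> y \<in> K"
  shows "card (scaled_union c K n) + n * card (K \<inter> (\<lambda>u. c * u) ` K) = (n + 1) * card K"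
proof (induction n)
  case (Suc n)
  let ?S = "scaled_union c K n"
  have inj: "inj (\<lambda>u. c * u)" using \<open>c \<noteq> 0\<close> by (auto intro: injI)
  have "card (scaled_union c K (Suc n)) + card (K \<inter> (\<lambda>u. c * u) ` K)
      = card K + card ((\<lambda>u. c * u) ` ?S)"
    using card_Un_Int[of K "(\<lambda>u. c * u) ` ?S"] \<open>finite K\<close> finite_scaled_union[OF \<open>finite K\<close>]
    by (simp add: scaled_union_Suc scaled_union_Int_scaled[OF closed])
  also have "\<dots> = card K + card ?S"
    by (simp add: card_image inj_on_subset[OF inj])
  finally show ?case using Suc.IH by simp
qed simp

lemma odd_interval_div5_closed:
  fixes N y :: int
  assumes "5 * y \<in> {x. odd x \<and> 1 \<le> x \<and> x \<le> N}"
  shows "y \<in> {x. odd x \<and> 1 \<le> x \<and> x \<le> N}"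
  using assms by auto

lemma odd_interval_Int_times5:
  fixes N :: int
  defines "K \<equiv> {x. odd x \<and> 1 \<le> x \<and> x \<le> N}"
  shows "K \<inter> (\<lambda>u. 5 * u) ` K = (\<lambda>u. 5 * u) ` {x. odd x \<and> 1 \<le> x \<and> x \<le> N div 5}"
  unfolding K_def by (auto simp: image_iff)

lemma card_odd_interval_Int_times5:
  fixes N :: int
  defines "K \<equiv> {x. odd x \<and> 1 \<le> x \<and> x \<le> N}"
  shows "card (K \<inter> (\<lambda>u. 5 * u) ` K) = nat ((N div 5 + 1) div 2)"
proof -
  have "inj_on (\<lambda>u::int. 5 * u) A" for A by (auto intro: inj_onI)
  then show ?thesis
    unfolding K_def odd_interval_Int_times5 by (simp add: card_image card_odd_interval)
qed

theorem lemma2p3: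
  fixes k m :: nat
  assumes "k \<ge> 1"
  defines "K \<equiv> {x :: int. odd x \<and> 1 \<le> x \<and> x \<le> 6 * int k - 1}"
  defines "T \<equiv> (\<Union>j\<in>{0..m}. (\<lambda>u. 5 ^ j * u) ` K)"
  shows "int (card T) = 3 * int k * (int m + 1) - int m * \<lfloor>(3 * real k + 2) / 5\<rfloor>"
proof -
  have "finite K" unfolding K_def by (rule finite_subset[of _ "{1..6 * int k - 1}"]) auto
  then have "card T + m * card (K \<inter> (\<lambda>u. 5 * u) ` K) = (m + 1) * card K"
    unfolding T_def scaled_union_def[symmetric]
    using card_scaled_union[of K 5 m] odd_interval_div5_closed by (simp add: K_def)
  moreover have "card K = 3 * k" unfolding K_def card_odd_interval by simp
  moreover have "card (K \<inter> (\<lambda>u. 5 * u) ` K) = (3 * k + 2) div 5"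
    unfolding K_def card_odd_interval_Int_times5 by simp
  ultimately have count: "card T + m * ((3 * k + 2) div 5) = (m + 1) * (3 * k)" by simp
  have floor_eq: "\<lfloor>(3 * real k + 2) / 5\<rfloor> = int ((3 * k + 2) div 5)"
    using floor_divide_of_nat_eq[of "3 * k + 2" 5, where 'a = real] by (simp add: add.commute)
  have "int (card T) + int m * int ((3 * k + 2) div 5) = (int m + 1) * (3 * int k)"
    using arg_cong[where f = int, OF count] by (simp add: of_nat_div algebra_simps)
  then show ?thesis unfolding floor_eq by (simp add: algebra_simps)
qed

end
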